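(* Let $\varphi\in\mathcal{L}$. If there is a notional graded doxastic model (NGDM) $M$ and a world $w$ of $M$ with $(M,w)\models\varphi$, then there is a multi-agent graded belief model (MAGBM) $(S,U)$ with $(S,U)\models\varphi$.
   Context: Fix a countably infinite set of atoms $\mathit{Atm}$ and a finite set of agents $\mathit{Agt}=\{1,\dots,n\}$; a group is a non-empty subset $J\subseteq\mathit{Agt}$, $2^{\mathit{Agt}*}$ the set of groups. $\mathbb{N}_0$ (resp. $\mathbb{N}_1$) are the naturals with (resp. without) $0$; $\mathbb{N}_0^{\omega}=\mathbb{N}_0\cup\{\omega\}$, $\mathbb{N}_1^{\omega}=\mathbb{N}_1\cup\{\omega\}$ with $\omega$ infinite. A multiset over $X$ is a function $X\to\mathbb{N}_0^{\omega}$. A possibly infinite sum of grades equals the sum of its non-zero summands if there are finitely many and none is $\omega$, and $\omega$ otherwise. $\mathcal{L}_0$: $\alpha::=p\mid\neg\alpha\mid\alpha\wedge\alpha\mid\triangle_i^k\alpha$ ($p\in\mathit{Atm}$, $i\in\mathit{Agt}$, $k\in\mathbb{N}_1^{\omega}$). $\mathcal{L}$: $\varphi::=\alpha\mid\neg\varphi\mid\varphi\wedge\varphi\mid\Box_J^k\varphi$ ($\alpha\in\mathcal{L}_0$, $J$ a group, $k\in\mathbb{N}_0$). MAGBM semantics: a state is $S=(\mathcal{B}_1,\dots,\mathcal{B}_n,V)$ with each $\mathcal{B}_i$ a multiset over $\mathcal{L}_0$ (agent $i$'s graded belief base) and $V\subseteq\mathit{Atm}$; $\mathbf{S}$ is the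 set of states. $S\models p$ iff $p\in V$; Boolean clauses as usual; $S\models\triangle_i^k\alpha$ iff $\mathcal{B}_i(\alpha)\ge k$. For a group $J$, $\mathcal{B}_J(\alpha)=\sum_{i\in J}\mathcal{B}_i(\alpha)$. For $k\in\mathbb{N}_0$, $S\mathcal{R}_J^kS'$ iff $\sum_{\alpha\in\mathcal{L}_0,S'\not\models\alpha}\mathcal{B}_J(\alpha)\le k$. An MAGBM is a pair $(S,U)$ with $S\in\mathbf{S}$, $U\subseteq\mathbf{S}$; $(S,U)\models\alpha$ iff $S\models\alpha$ for $\alpha\in\mathcal{L}_0$; Boolean clauses as usual; $(S,U)\models\Box_J^k\varphi$ iff for all $S'\in U$ with $S\mathcal{R}_J^kS'$, $(S',U)\models\varphi$. NGDM: a tuple $M=(W,\mathcal{D},\rho,\mathcal{V})$ with $W$ a set of worlds, $\mathcal{D}:\mathit{Agt}\times W\to$ (multisets over $\mathcal{L}_0$), $\rho:2^{\mathit{Agt}*}\times W\times W\to\mathbb{N}_0^{\omega}$, $\mathcal{V}:\mathit{Atm}\to2^W$, with satisfaction $(M,w)\models p$ iff $w\in\mathcal{V}(p)$; Boolean clauses as usual; $(M,w)\models\triangle_i^k\alpha$ iff $\mathcal{D}(i,w)(\alpha)\ge k$; $(M,w)\models\Box_J^k\varphi$ iff for all $u\in W$ with $\rho(J,w,u)\le k$, $(M,u)\models\varphi$; and such that for all groups $J$ and $w,u\in W$, $\rho(J,w,u)=\sum_{\alpha\in\mathcal{L}_0,(M,u)\not\models\alpha}\sum_{i\in J}\mathcal{D}(i,w)(\alpha)$.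 *)

theory Defs
  imports Main "HOL-Library.Extended_Nat"
begin

(* Atoms: nat (countably infinite). Agents: a finite (nonempty) type 'agt.
   Grades in N_0^omega: enat. *)

datatype 'agt fm0 =
    Atom0 nat
  | Neg0 "'agt fm0"
  | Conj0 "'agt fm0" "'agt fm0"
  | Tri 'agt enat "'agt fm0"

datatype 'agt fm =
    Base "'agt fm0"
  | Neg "'agt fm"
  | Conj "'agt fm" "'agt fm"
  | Box "'agt set" nat "'agt fm"

fun wf0 :: "'agt fm0 \<Rightarrow> bool" where
  "wf0 (Atom0 p) = True"
| "wf0 (Neg0 a) = wf0 a"
| "wf0 (Conj0 a b) = (wf0 a \<and> wf0 b)"
| "wf0 (Tri i k a) = (k \<noteq> 0 \<and> wf0 a)"

fun wf :: "'agt fm \<Rightarrow> bool" where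
  "wf (Base a) = wf0 a"
| "wf (Neg f) = wf f"
| "wf (Conj f g) = (wf f \<and> wf g)"
| "wf (Box J k f) = (J \<noteq> {} \<and> wf f)"

definition gsum :: "('a \<Rightarrow> enat) \<Rightarrow> 'a set \<Rightarrow> enat" where
  "gsum f A = (if finite {x\<in>A. f x \<noteq> 0} \<and> (\<forall>x\<in>A. f x \<noteq> \<infinity>)
               then sum f {x\<in>A. f x \<noteq> 0} else \<infinity>)"

fun sat0 :: "('agt \<Rightarrow> 'agt fm0 \<Rightarrow> enat) \<Rightarrow> nat set \<Rightarrow> 'agt fm0 \<Rightarrow> bool" where
  "sat0 B Val (Atom0 p) = (p \<in> Val)"
| "sat0 B Val (Neg0 a) = (\<not> sat0 B Val a)"
| "sat0 B Val (Conj0 a b) = (sat0 B Val a \<and> sat0 B Val b)"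
| "sat0 B Val (Tri i k a) = (B i a \<ge> k)"

type_synonym 'agt state = "('agt \<Rightarrow> 'agt fm0 \<Rightarrow> enat) \<times> nat set"

definition sat_st :: "'agt state \<Rightarrow> 'agt fm0 \<Rightarrow> bool" where
  "sat_st S a = sat0 (fst S) (snd S) a"

definition baseJ :: "('agt \<Rightarrow> 'agt fm0 \<Rightarrow> enat) \<Rightarrow> 'agt set \<Rightarrow> 'agt fm0 \<Rightarrow> enat" where
  "baseJ B J a = (\<Sum>i\<in>J. B i a)"

definition relR :: "'agt set \<Rightarrow> nat \<Rightarrow> 'agt state \<Rightarrow> 'agt state \<Rightarrow> bool" where
  "relR J k S S' = (gsum (baseJ (fst S) J) {a. wf0 a \<and> \<not> sat_st S' a} \<le> enat k)"

fun magbm_sat :: "'agt state set \<Rightarrow> 'agt state \<Rightarrow> 'agt fm \<Rightarrow> bool" where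
  "magbm_sat U S (Base a) = sat_st S a"
| "magbm_sat U S (Neg f) = (\<not> magbm_sat U S f)"
| "magbm_sat U S (Conj f g) = (magbm_sat U S f \<and> magbm_sat U S g)"
| "magbm_sat U S (Box J k f) = (\<forall>S'\<in>U. relR J k S S' \<longrightarrow> magbm_sat U S' f)"

record ('agt, 'w) ngdm =
  W :: "'w set"
  D :: "'agt \<Rightarrow> 'w \<Rightarrow> 'agt fm0 \<Rightarrow> enat"
  rho :: "'agt set \<Rightarrow> 'w \<Rightarrow> 'w \<Rightarrow> enat"
  V :: "nat \<Rightarrow> 'w set"

definition ngdm_sat0 :: "('agt, 'w) ngdm \<Rightarrow> 'w \<Rightarrow> 'agt fm0 \<Rightarrow> bool" where
  "ngdm_sat0 M w a = sat0 (\<lambda>i. D M i w) {p. w \<in> V M p} a"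

fun ngdm_sat :: "('agt, 'w) ngdm \<Rightarrow> 'w \<Rightarrow> 'agt fm \<Rightarrow> bool" where
  "ngdm_sat M w (Base a) = ngdm_sat0 M w a"
| "ngdm_sat M w (Neg f) = (\<not> ngdm_sat M w f)"
| "ngdm_sat M w (Conj f g) = (ngdm_sat M w f \<and> ngdm_sat M w g)"
| "ngdm_sat M w (Box J k f) = (\<forall>u\<in>W M. rho M J w u \<le> enat k \<longrightarrow> ngdm_sat M u f)"

definition is_ngdm :: "('agt, 'w) ngdm \<Rightarrow> bool" where
  "is_ngdm M = ((\<forall>p. V M p \<subseteq> W M) \<and>
     (\<forall>J w u. J \<noteq> {} \<longrightarrow> w \<in> W M \<longrightarrow> u \<in> W M \<longrightarrow>
        rho M J w u = gsum (\<lambda>a. \<Sum>i\<in>J. D M i w a) {a. wf0 a \<and> \<not> ngdm_sat0 M u a}))"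

end

theory Submission
  imports Defs
begin

text \<open>Every world of an NGDM induces a state, namely its belief bases together with its
  valuation. Because the NGDM condition determines \<open>\<rho>\<close> from the belief bases exactly as
  \<open>\<R>\<^sub>J\<^sup>k\<close> is determined in a MAGBM, the induced states with the induced universe satisfy the
  same formulas as the worlds they come from.\<close>

definition ngdm_state :: "('agt, 'w) ngdm \<Rightarrow> 'w \<Rightarrow> 'agt state" where
  "ngdm_state M u = ((\<lambda>i. D M i u), {p. u \<in> V M p})"

lemma sat_st_ngdm_state: "sat_st (ngdm_state M u) a = ngdm_sat0 M u a"
  by (simp add: sat_st_def ngdm_sat0_def ngdm_state_def)

lemma relR_ngdm_state:
  assumes "is_ngdm M" and "J \<noteq> {}" and "w \<in> W M" and "u \<in> W M"
  shows "relR J k (ngdm_state M w) (ngdm_state M u) \<longleftrightarrow> rho M J w u \<le> enat k"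
  using assms unfolding is_ngdm_def relR_def baseJ_def
  by (simp add: sat_st_ngdm_state) (simp add: ngdm_state_def)

lemma magbm_sat_ngdm_state:
  assumes "is_ngdm M" and "wf phi" and "u \<in> W M"
  shows "magbm_sat (ngdm_state M ` W M) (ngdm_state M u) phi \<longleftrightarrow> ngdm_sat M u phi"
  using assms(2,3)
proof (induction phi arbitrary: u)
  case (Base a)
  then show ?case by (simp add: sat_st_ngdm_state)
next
  case (Box J k phi)
  then show ?case using relR_ngdm_state[OF assms(1)] by auto
qed simp_all

theorem lemma3:
  fixes phi :: "'agt::finite fm" and M :: "('agt, 'w) ngdm" and w :: 'w
  assumes "wf phi" and "is_ngdm M" and "w \<in> W M" and "ngdm_sat M w phi"
  shows "\<exists>S U. magbm_sat U S phi"
  using magbm_sat_ngdm_state[OF assms(2,1,3)] assms(4) by blast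

end
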